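(* Let $\Lambda\subset\mathbb{C}$ be a lattice. Let $\mathcal{V}\subset\mathbb{R}^2$ be a non-empty subset of the form $\mathcal{V}=V(\mathbb{R})$ for some algebraic subvariety $V\subset\mathbb{A}^2_\mathbb{R}$, such that $\mathcal{V}$ cannot be written as $V_1(\mathbb{R})\cup V_2(\mathbb{R})$ with $V_1,V_2\subset\mathbb{A}^2_\mathbb{R}$ algebraic subvarieties and both inclusions $V_i(\mathbb{R})\subset\mathcal{V}$ proper. If $f(\mathcal{V})$ is contained in a bialgebraic curve for $\wp_{\Lambda\times\overline{\Lambda}}$, where $f(v,w)=(v+iw,v-iw)$, then $\mathcal{V}$ is weakly bialgebraic for $\mathcal{P}_\Lambda$.
   Context: Identify $\mathbb{R}^2$ with $\mathbb{C}$ via $(x,y)\mapsto x+iy$, and $\mathbb{R}^2\subset\mathbb{C}^2$. For a lattice $\Lambda\subset\mathbb{C}$ let $\wp_\Lambda:\mathbb{C}\to\mathbb{P}^1(\mathbb{C})$ be its Weierstrass $\wp$-function and $\mathcal{P}_\Lambda:\mathbb{R}^2\smallsetminus\Lambda\to\mathbb{R}^2$, $(x,y)\mapsto(\mathrm{Re}\,\wp_\Lambda(x+iy),\mathrm{Im}\,\wp_\Lambda(x+iy))$. A non-empty subset $\mathcal{V}\subsetneq\mathbb{R}^2$ is called weakly bialgebraic for $\mathcal{P}_\Lambda$ if (i) there exist algebraic subvarieties $V\subset\mathbb{A}^2_\mathbb{R}$ and $W\subsetneq\mathbb{A}^2_\mathbb{R}$ with $\mathcal{V}=V(\mathbb{R})$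 and $\mathcal{P}_\Lambda(\mathcal{V}\cap(\mathbb{R}^2\smallsetminus\Lambda))\subset W(\mathbb{R})$; and (ii) $\mathcal{V}$ cannot be written as $V_1(\mathbb{R})\cup V_2(\mathbb{R})$ with $V_i$ algebraic subvarieties and $V_i(\mathbb{R})\subsetneq\mathcal{V}$. Let $\wp_{\Lambda\times\overline{\Lambda}}=\wp_\Lambda\times\wp_{\overline{\Lambda}}:\mathbb{C}^2\to\mathbb{P}^1(\mathbb{C})^2$, with $\overline{\Lambda}$ the complex conjugate lattice. An irreducible algebraic curve $C\subset\mathbb{C}^2$ is bialgebraic for $\wp_{\Lambda\times\overline{\Lambda}}$ if $\wp_{\Lambda\times\overline{\Lambda}}(C)$ is not Zariski dense in $\mathbb{P}^1(\mathbb{C})^2$. *)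

theory Defs
  imports "HOL-Analysis.Analysis" "HOL-Computational_Algebra.Polynomial"
    "HOL-Computational_Algebra.Factorial_Ring"
begin

definition is_lattice :: "complex set \<Rightarrow> bool" where
  "is_lattice L \<longleftrightarrow> (\<exists>w1 w2. w1 \<noteq> 0 \<and> Im (w2 / w1) \<noteq> 0 \<and>
      L = {of_int m * w1 + of_int n * w2 | m n. True})"

text \<open>Weierstrass wp-function (meaningful for z outside the lattice).\<close>
definition wp :: "complex set \<Rightarrow> complex \<Rightarrow> complex" where
  "wp L z = 1 / z^2 + infsum (\<lambda>w. 1 / (z - w)^2 - 1 / w^2) (L - {0})"

definition wpR :: "complex set \<Rightarrow> real \<times> real \<Rightarrow> real \<times> real" where
  "wpR L p = (Re (wp L (Complex (fst p) (snd p))), Im (wp L (Complex (fst p) (snd p))))"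

text \<open>Bivariate polynomials are represented as 'a poly poly; P(x,y) = eval2 P x y.\<close>
definition eval2 :: "'a::comm_semiring_1 poly poly \<Rightarrow> 'a \<Rightarrow> 'a \<Rightarrow> 'a" where
  "eval2 P x y = poly (poly P [:y:]) x"

definition real_alg_set :: "(real \<times> real) set \<Rightarrow> bool" where
  "real_alg_set S \<longleftrightarrow> (\<exists>F. finite F \<and> S = {(x, y). \<forall>P\<in>F. eval2 P x y = 0})"

definition proper_real_alg_set :: "(real \<times> real) set \<Rightarrow> bool" where
  "proper_real_alg_set S \<longleftrightarrow> (\<exists>F. finite F \<and> (\<exists>P\<in>F. P \<noteq> 0) \<and>
      S = {(x, y). \<forall>P\<in>F. eval2 P x y = 0})"

definition real_alg_indecomposable :: "(real \<times> real) set \<Rightarrow> bool" where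
  "real_alg_indecomposable S \<longleftrightarrow>
     \<not> (\<exists>V1 V2. real_alg_set V1 \<and> real_alg_set V2 \<and> V1 \<subset> S \<and> V2 \<subset> S \<and> S = V1 \<union> V2)"

definition weakly_bialgebraic :: "complex set \<Rightarrow> (real \<times> real) set \<Rightarrow> bool" where
  "weakly_bialgebraic L S \<longleftrightarrow>
     S \<noteq> {} \<and> S \<noteq> UNIV \<and> real_alg_set S \<and>
     (\<exists>W. proper_real_alg_set W \<and>
          wpR L ` {p \<in> S. Complex (fst p) (snd p) \<notin> L} \<subseteq> W) \<and>
     real_alg_indecomposable S"

definition irred_alg_curve :: "(complex \<times> complex) set \<Rightarrow> bool" where
  "irred_alg_curve C \<longleftrightarrow> (\<exists>Q. irreducible Q \<and> C = {(z1, z2). eval2 Q z1 z2 = 0})"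

text \<open>Bialgebraic curve for wp_L \<times> wp_(conj L): the image (on the non-polar part)
  lies in the zero set of a nonzero polynomial, i.e. is not Zariski dense.\<close>
definition bialgebraic_curve :: "complex set \<Rightarrow> (complex \<times> complex) set \<Rightarrow> bool" where
  "bialgebraic_curve L C \<longleftrightarrow> irred_alg_curve C \<and>
     (\<exists>R. R \<noteq> 0 \<and> (\<forall>(z1, z2)\<in>C. z1 \<notin> L \<longrightarrow> z2 \<notin> cnj ` L \<longrightarrow>
          eval2 R (wp L z1) (wp (cnj ` L) z2) = 0))"

definition fmap :: "real \<times> real \<Rightarrow> complex \<times> complex" where
  "fmap p = (Complex (fst p) (snd p), Complex (fst p) (- snd p))"

end

theory Submission
  imports Defs
begin

lemma eval2_0 [simp]: "eval2 0 x y = 0"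
  and eval2_pCons [simp]: "eval2 (pCons c P) x y = poly c x + y * eval2 P x y"
  and eval2_add [simp]: "eval2 (P + Q) x y = eval2 P x y + eval2 Q x y"
  and eval2_mult [simp]: "eval2 (P * Q) x y = eval2 P x y * eval2 Q x y"
  by (simp_all add: eval2_def)

lemma eval2_eq_0_imp_eq_0:
  fixes P :: "'a::{idom,ring_char_0} poly poly"
  assumes "\<And>x y. eval2 P x y = 0"
  shows "P = 0"
proof (rule ccontr)
  assume "P \<noteq> 0"
  have "poly P [:y:] = 0" for y
    using assms poly_all_0_iff_0 by (metis eval2_def)
  then have "range (\<lambda>y. [:y:]) \<subseteq> {c. poly P c = 0}"
    by auto
  moreover have "infinite (range (\<lambda>y::'a. [:y:]))"
    using infinite_UNIV_char_0 by (auto dest: finite_imageD simp: inj_on_def)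
  ultimately show False
    using poly_roots_finite[OF \<open>P \<noteq> 0\<close>] finite_subset by blast
qed

lemma poly_eval2_compose:
  fixes c :: "'a::comm_ring_1 poly"
  shows "\<exists>H. \<forall>a b. eval2 H a b = poly c (eval2 U a b)"
proof (induction c)
  case 0
  show ?case by (rule exI[of _ 0]) simp
next
  case (pCons d c)
  then obtain H where "\<forall>a b. eval2 H a b = poly c (eval2 U a b)" by blast
  then show ?case
    by (intro exI[of _ "[:[:d:]:] + U * H"]) simp
qed

lemma eval2_compose:
  fixes R :: "'a::comm_ring_1 poly poly"
  shows "\<exists>G. \<forall>a b. eval2 G a b = eval2 R (eval2 U a b) (eval2 V a b)"
proof (induction R)
  case 0
  show ?case by (rule exI[of _ 0]) simp
next
  case (pCons c R)
  then obtain G where G: "\<forall>a b. eval2 G a b = eval2 R (eval2 U a b) (eval2 V a b)" by blast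
  obtain H where H: "\<forall>a b. eval2 H a b = poly c (eval2 U a b)"
    using poly_eval2_compose by blast
  show ?case
    by (rule exI[of _ "H + V * G"]) (simp add: G H)
qed

lemma poly_of_real_Re_Im:
  "poly c (of_real x) = Complex (poly (map_poly Re c) x) (poly (map_poly Im c) x)"
  by (induction c) (simp_all add: map_poly_pCons complex_eq_iff)

lemma eval2_of_real_Re_Im:
  "eval2 G (of_real x) (of_real y) =
     Complex (eval2 (map_poly (map_poly Re) G) x y) (eval2 (map_poly (map_poly Im) G) x y)"
  by (induction G) (simp_all add: map_poly_pCons complex_eq_iff poly_of_real_Re_Im)

lemma bipoly_eq_0_iff_Re_Im:
  fixes G :: "complex poly poly"
  shows "G = 0 \<longleftrightarrow> map_poly (map_poly Re) G = 0 \<and> map_poly (map_poly Im) G = 0"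
  by (auto simp: poly_eq_iff coeff_map_poly complex_eq_iff)

lemma eval2_conj_coordinates:
  fixes R :: "complex poly poly"
  obtains G where "\<And>a b. eval2 G a b = eval2 R (a + \<i> * b) (a - \<i> * b)"
proof -
  obtain G where G: "\<forall>a b. eval2 G a b =
      eval2 R (eval2 [:[:0, 1:], [:\<i>:]:] a b) (eval2 [:[:0, 1:], [:- \<i>:]:] a b)"
    using eval2_compose by blast
  show thesis
    using G by (intro that[of G]) (simp add: mult.commute)
qed

lemma eval2_conj_eq_0_imp_eq_0:
  fixes R :: "complex poly poly"
  assumes "\<And>z. eval2 R z (cnj z) = 0"
  shows "R = 0"
proof -
  obtain G where G: "\<And>a b. eval2 G a b = eval2 R (a + \<i> * b) (a - \<i> * b)"
    using eval2_conj_coordinates by blast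
  have "eval2 G (of_real x) (of_real y) = 0" for x y
    using G assms[of "Complex x y"]
    by (simp add: Complex_eq)
  then have "map_poly (map_poly Re) G = 0" "map_poly (map_poly Im) G = 0"
    by (auto intro!: eval2_eq_0_imp_eq_0 simp: eval2_of_real_Re_Im complex_eq_iff)
  then have "G = 0"
    using bipoly_eq_0_iff_Re_Im by blast
  have "eval2 R z w = 0" for z w
  proof -
    have "z = (z + w) / 2 + \<i> * ((z - w) / (2 * \<i>))"
      and "w = (z + w) / 2 - \<i> * ((z - w) / (2 * \<i>))"
      by (simp_all add: field_simps)
    then show ?thesis
      using G[of "(z + w) / 2" "(z - w) / (2 * \<i>)"] \<open>G = 0\<close> by simp
  qed
  then show "R = 0"
    by (rule eval2_eq_0_imp_eq_0)
qed

lemma proper_real_alg_set_conj_zeros: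
  fixes R :: "complex poly poly"
  assumes "R \<noteq> 0"
  shows "proper_real_alg_set {(x, y). eval2 R (Complex x y) (cnj (Complex x y)) = 0}"
proof -
  obtain G where G: "\<And>a b. eval2 G a b = eval2 R (a + \<i> * b) (a - \<i> * b)"
    using eval2_conj_coordinates by blast
  define A where "A = map_poly (map_poly Re) G"
  define B where "B = map_poly (map_poly Im) G"
  have eval_AB:
    "eval2 R (Complex x y) (cnj (Complex x y)) = Complex (eval2 A x y) (eval2 B x y)" for x y
    using G eval2_of_real_Re_Im[of G x y]
    by (simp add: A_def B_def Complex_eq)
  have "A \<noteq> 0 \<or> B \<noteq> 0"
  proof (rule ccontr)
    assume "\<not> (A \<noteq> 0 \<or> B \<noteq> 0)"
    then have "eval2 R z (cnj z) = 0" for z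
      using eval_AB[of "Re z" "Im z"] by (simp add: complex_eq_iff)
    then show False
      using assms eval2_conj_eq_0_imp_eq_0 by blast
  qed
  moreover have "{(x, y). eval2 R (Complex x y) (cnj (Complex x y)) = 0} =
      {(x, y). \<forall>P\<in>{A, B}. eval2 P x y = 0}"
    by (auto simp: eval_AB complex_eq_iff)
  ultimately show ?thesis
    unfolding proper_real_alg_set_def by (intro exI[of _ "{A, B}"]) auto
qed

lemma wp_image_cnj: "wp (cnj ` L) (cnj z) = cnj (wp L z)"
proof -
  have "infsum (\<lambda>w. 1 / (cnj z - w)^2 - 1 / w^2) (cnj ` (L - {0}))
      = infsum (\<lambda>w. cnj (1 / (z - w)^2 - 1 / w^2)) (L - {0})"
    by (subst infsum_reindex) (auto simp: inj_on_def o_def)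
  also have "\<dots> = cnj (infsum (\<lambda>w. 1 / (z - w)^2 - 1 / w^2) (L - {0}))"
    by (rule infsum_cnj)
  moreover have "cnj ` L - {0} = cnj ` (L - {0})"
    by (auto simp: image_iff)
  ultimately show ?thesis
    by (simp add: wp_def)
qed

lemma fmap_eq: "fmap (x, y) = (Complex x y, cnj (Complex x y))"
  by (simp add: fmap_def complex_eq_iff)

lemma irred_alg_curve_not_supset_range_fmap:
  assumes "irred_alg_curve C"
  shows "\<not> range fmap \<subseteq> C"
proof
  assume range: "range fmap \<subseteq> C"
  obtain Q where Q: "irreducible Q" "C = {(z1, z2). eval2 Q z1 z2 = 0}"
    using assms unfolding irred_alg_curve_def by blast
  have "eval2 Q z (cnj z) = 0" for z
  proof -
    have "fmap (Re z, Im z) \<in> C"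
      using range by blast
    then show ?thesis
      using Q(2) by (simp add: fmap_eq)
  qed
  then have "Q = 0"
    by (rule eval2_conj_eq_0_imp_eq_0)
  with Q(1) show False
    by simp
qed

theorem lemma2p3p4:
  fixes L :: "complex set" and S :: "(real \<times> real) set" and C :: "(complex \<times> complex) set"
  assumes "is_lattice L"
    and "S \<noteq> {}"
    and "real_alg_set S"
    and "real_alg_indecomposable S"
    and "bialgebraic_curve L C"
    and "fmap ` S \<subseteq> C"
  shows "weakly_bialgebraic L S"
proof -
  obtain R where "irred_alg_curve C" "R \<noteq> 0"
    and R: "\<And>z1 z2. (z1, z2) \<in> C \<Longrightarrow> z1 \<notin> L \<Longrightarrow> z2 \<notin> cnj ` L \<Longrightarrow>
          eval2 R (wp L z1) (wp (cnj ` L) z2) = 0"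
    using assms(5) unfolding bialgebraic_curve_def by blast
  have "S \<noteq> UNIV"
    using assms(6) irred_alg_curve_not_supset_range_fmap[OF \<open>irred_alg_curve C\<close>] by auto
  define W where "W = {(x, y). eval2 R (Complex x y) (cnj (Complex x y)) = 0}"
  have "wpR L (x, y) \<in> W" if "(x, y) \<in> S" "Complex x y \<notin> L" for x y
  proof -
    have "eval2 R (wp L (Complex x y)) (wp (cnj ` L) (cnj (Complex x y))) = 0"
      using that assms(6) by (intro R) (auto simp: fmap_eq[symmetric])
    then show ?thesis
      by (simp add: W_def wpR_def wp_image_cnj)
  qed
  then have "wpR L ` {p \<in> S. Complex (fst p) (snd p) \<notin> L} \<subseteq> W"
    by auto
  then show ?thesis
    unfolding weakly_bialgebraic_def
    using assms(2-4) \<open>S \<noteq> UNIV\<close> proper_real_alg_set_conj_zeros[OF \<open>R \<noteq> 0\<close>]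
    by (auto simp: W_def)
qed

end
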